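(* Let $n_0$ be a nonnegative bounded measurable function on $(0,\infty)$ with $\lim_{x\to\infty}x^2n_0(x)=0$, and let $n$ be the solution of the Kompaneets problem with initial data $n_0$. Then for any $t>s>0$, \[ \int_0^\infty n_t^2\,dx+\int_s^t\int_0^\infty\big[n_\tau^2+x^2(\partial_xn_\tau)^2\big]\,dx\,d\tau\le\int_0^\infty n_s^2\,dx+2\int_s^t\int_0^\infty xn_\tau^2\,dx\,d\tau. \]
   Context: The Kompaneets problem: for $x>0$, $t>0$, $\partial_t n = \partial_x J$ with $J(x,n) = x^2\partial_x n + (x^2-2x)n + n^2$, together with $\lim_{x\to\infty} J(x,n_t)=0$; no boundary condition at $x=0$. $n_t(x)=n(x,t)$; the solution is the unique nonnegative one in $C([0,\infty);L^1)\cap L^\infty_{loc}([0,\infty);L^\infty)\cap C^{2,1}((0,\infty)^2)$. *)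

theory Defs
  imports "HOL-Analysis.Analysis"
begin

definition kflux :: "real \<Rightarrow> real \<Rightarrow> real \<Rightarrow> real" where
  "kflux x nv nxv = x\<^sup>2 * nxv + (x\<^sup>2 - 2 * x) * nv + nv\<^sup>2"

text \<open>n x t stands for n(x,t). A (nonnegative) solution of the Kompaneets problem
  with initial data n0, in the class
  C([0,oo);L^1) \<inter> L^oo_loc([0,oo);L^oo) \<inter> C^{2,1}((0,oo)^2).\<close>
definition kompaneets_solution ::
  "(real \<Rightarrow> real) \<Rightarrow> (real \<Rightarrow> real \<Rightarrow> real) \<Rightarrow> bool" where
  "kompaneets_solution n0 n \<longleftrightarrow>
     \<comment> \<open>nonnegativity\<close>
     (\<forall>x>0. \<forall>t>0. 0 \<le> n x t) \<and>
     \<comment> \<open>initial datum (as element of L^1)\<close>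
     (AE x in lborel. x > 0 \<longrightarrow> n x 0 = n0 x) \<and>
     \<comment> \<open>C([0,oo); L^1(0,oo))\<close>
     (\<forall>t\<ge>0. set_integrable lborel {0<..} (\<lambda>x. n x t)) \<and>
     (\<forall>t0\<ge>0. ((\<lambda>t. set_lebesgue_integral lborel {0<..} (\<lambda>x. \<bar>n x t - n x t0\<bar>))
                   \<longlongrightarrow> 0) (at t0 within {0..})) \<and>
     \<comment> \<open>L^oo_loc([0,oo); L^oo(0,oo))\<close>
     (\<forall>T>0. \<exists>M. \<forall>t\<in>{0..T}. AE x in lborel. x > 0 \<longrightarrow> \<bar>n x t\<bar> \<le> M) \<and>
     \<comment> \<open>C^{2,1}((0,oo)^2) together with the equation and the flux condition\<close>
     (\<exists>nx nxx nt :: real \<Rightarrow> real \<Rightarrow> real.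
        continuous_on ({0<..} \<times> {0<..}) (\<lambda>(x,t). n x t) \<and>
        continuous_on ({0<..} \<times> {0<..}) (\<lambda>(x,t). nx x t) \<and>
        continuous_on ({0<..} \<times> {0<..}) (\<lambda>(x,t). nxx x t) \<and>
        continuous_on ({0<..} \<times> {0<..}) (\<lambda>(x,t). nt x t) \<and>
        (\<forall>x>0. \<forall>t>0.
           ((\<lambda>y. n y t) has_real_derivative nx x t) (at x) \<and>
           ((\<lambda>y. nx y t) has_real_derivative nxx x t) (at x) \<and>
           ((\<lambda>s. n x s) has_real_derivative nt x t) (at t) \<and>
           \<comment> \<open>the equation  d_t n = d_x J(x,n)\<close>
           ((\<lambda>y. kflux y (n y t) (nx y t)) has_real_derivative nt x t) (at x)) \<and>
        \<comment> \<open>no-flux condition at infinity\<close>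
        (\<forall>t>0. ((\<lambda>x. kflux x (n x t) (nx x t)) \<longlongrightarrow> 0) at_top))"

end

(*
  Multiply the equation by 2n and integrate over [eps, R] x [s, t]. Integrating by parts in x
  against the energy flux Phi gives an exact identity whose only uncontrolled terms are the time
  integrals of Phi at x = eps and x = R. With h(x) = int_s^t n^2, the time integral of Phi at x
  equals x^2 h' + (x^2 - 2x) h + 4/3 int_s^t n^3. If it stayed below -delta near 0, then
  x^2 h' <= -delta/2 and h would blow up like 1/x, contradicting the boundedness of n; if it
  stayed above delta near infinity, then g = x^2 h would satisfy g' + 2g >= delta, so g >= delta/4
  eventually and int int x n^2 >= int delta/(4x) dx = infinity. Hence, when the right-hand side is
  finite, both boundary terms become arbitrarily small along suitable eps -> 0 and R -> infinity,
  and monotone convergence over the intervals [1/(k+1), k+1] gives the inequality.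
*)

theory Submission
  imports Defs
begin

lemma DERIV_le_imp_diff_le:
  fixes f g f' g' :: "real \<Rightarrow> real"
  assumes "a \<le> b"
    and "\<And>x. x \<in> {a..b} \<Longrightarrow> (f has_real_derivative f' x) (at x)"
    and "\<And>x. x \<in> {a..b} \<Longrightarrow> (g has_real_derivative g' x) (at x)"
    and "\<And>x. x \<in> {a..b} \<Longrightarrow> f' x \<le> g' x"
  shows "f b - f a \<le> g b - g a"
proof -
  have "(\<lambda>x. f x - g x) b \<le> (\<lambda>x. f x - g x) a"
  proof (rule DERIV_nonpos_imp_nonincreasing[OF \<open>a \<le> b\<close>])
    fix x assume "a \<le> x" "x \<le> b"
    with assms show "\<exists>y. ((\<lambda>x. f x - g x) has_real_derivative y) (at x) \<and> y \<le> 0"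
      by (intro exI[of _ "f' x - g' x"]) (auto intro!: derivative_eq_intros)
  qed
  then show ?thesis by simp
qed

lemma linear_differential_inequality:
  fixes g g' :: "real \<Rightarrow> real"
  assumes "0 < c" "a \<le> x"
    and "\<And>y. a \<le> y \<Longrightarrow> (g has_real_derivative g' y) (at y)"
    and "\<And>y. a \<le> y \<Longrightarrow> \<delta> \<le> g' y + c * g y"
  shows "\<delta> / c + (g a - \<delta> / c) * exp (c * (a - x)) \<le> g x"
proof -
  have "exp (c * a) * (g a - \<delta> / c) \<le> exp (c * x) * (g x - \<delta> / c)"
  proof (rule DERIV_nonneg_imp_nondecreasing[OF \<open>a \<le> x\<close>])
    fix y assume "a \<le> y"
    have "((\<lambda>y. exp (c * y) * (g y - \<delta> / c)) has_real_derivative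
        exp (c * y) * (g' y + c * g y - \<delta>)) (at y)"
      using assms(1) assms(3)[OF \<open>a \<le> y\<close>]
      by (auto intro!: derivative_eq_intros simp: field_simps)
    moreover have "0 \<le> exp (c * y) * (g' y + c * g y - \<delta>)"
      using assms(4)[OF \<open>a \<le> y\<close>] by simp
    ultimately show "\<exists>d. ((\<lambda>y. exp (c * y) * (g y - \<delta> / c)) has_real_derivative d) (at y) \<and> 0 \<le> d"
      by blast
  qed
  then have "(g a - \<delta> / c) * (exp (c * a) / exp (c * x)) \<le> g x - \<delta> / c"
    by (simp add: field_simps)
  then show ?thesis by (simp add: exp_diff[symmetric] right_diff_distrib)
qed

lemma integral_ge_ln_ratio:
  fixes f :: "real \<Rightarrow> real"
  assumes "0 < a" "a \<le> b" "continuous_on {a..b} f" "\<And>x. x \<in> {a..b} \<Longrightarrow> c / x \<le> f x"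
  shows "c * ln (b / a) \<le> integral {a..b} f"
proof (rule has_integral_le)
  show "((\<lambda>x. c / x) has_integral c * ln (b / a)) {a..b}"
  proof -
    have "((\<lambda>x. c / x) has_integral c * ln b - c * ln a) {a..b}"
    proof (rule fundamental_theorem_of_calculus[OF \<open>a \<le> b\<close>])
      fix x assume "x \<in> {a..b}"
      then have "0 < x" using \<open>0 < a\<close> by simp
      then have "((\<lambda>x. c * ln x) has_real_derivative c / x) (at x)"
        by (auto intro!: derivative_eq_intros)
      then show "((\<lambda>x. c * ln x) has_vector_derivative c / x) (at x within {a..b})"
        by (simp add: has_real_derivative_iff_has_vector_derivative has_vector_derivative_at_within)
    qed
    then show ?thesis using assms(1,2) by (simp add: ln_div right_diff_distrib)
  qed
  show "(f has_integral integral {a..b} f) {a..b}"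
    using assms(3) by (intro integrable_integral integrable_continuous_interval)
qed (use assms(4) in auto)

lemma continuous_on_interval_section:
  fixes f :: "real \<Rightarrow> real \<Rightarrow> real"
  assumes "continuous_on ({a..b} \<times> {c..d}) (\<lambda>(x, y). f x y)" "y \<in> {c..d}"
  shows "continuous_on {a..b} (\<lambda>x. f x y)"
  by (rule continuous_on_compose2[OF assms(1), of _ "\<lambda>x. (x, y)", simplified])
     (use assms(2) in \<open>auto intro!: continuous_intros\<close>)

lemma continuous_on_integral_interval_param:
  fixes f :: "real \<Rightarrow> real \<Rightarrow> real"
  assumes "continuous_on ({a..b} \<times> {c..d}) (\<lambda>(x, y). f x y)"
  shows "continuous_on {c..d} (\<lambda>y. integral {a..b} (\<lambda>x. f x y))"
proof -
  have "continuous_on ({c..d} \<times> {a..b}) (\<lambda>z. (\<lambda>(x, y). f x y) (snd z, fst z))"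
    by (rule continuous_on_compose2[OF assms]) (auto intro!: continuous_intros)
  then have "continuous_on ({c..d} \<times> {a..b}) (\<lambda>(y, x). f x y)"
    by (simp add: case_prod_beta')
  from integral_continuous_on_param[where f = "\<lambda>y x. f x y", OF this[folded cbox_interval]]
  show ?thesis by (simp add: cbox_interval)
qed

lemma integral_swap_interval:
  fixes f :: "real \<Rightarrow> real \<Rightarrow> real"
  assumes "continuous_on ({a..b} \<times> {c..d}) (\<lambda>(x, y). f x y)"
  shows "integral {a..b} (\<lambda>x. integral {c..d} (f x))
       = integral {c..d} (\<lambda>y. integral {a..b} (\<lambda>x. f x y))"
  using integral_swap_continuous[of a c b d f, unfolded cbox_Pair_eq, unfolded cbox_interval] assms
  by simp

lemma nn_integral_interval_continuous:
  fixes f :: "real \<Rightarrow> real"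
  assumes "continuous_on {a..b} f" "\<And>x. x \<in> {a..b} \<Longrightarrow> 0 \<le> f x"
  shows "(\<integral>\<^sup>+x\<in>{a..b}. ennreal (f x) \<partial>lborel) = ennreal (integral {a..b} f)"
  using assms by (intro nn_integral_has_integral_lebesgue' integrable_integral integrable_continuous_interval)

lemma iterated_integral_interval_continuous:
  fixes f :: "real \<Rightarrow> real \<Rightarrow> real"
  assumes cont: "continuous_on ({a..b} \<times> {c..d}) (\<lambda>(x, y). f x y)"
    and nonneg: "\<And>x y. x \<in> {a..b} \<Longrightarrow> y \<in> {c..d} \<Longrightarrow> 0 \<le> f x y"
  shows "0 \<le> integral {c..d} (\<lambda>y. integral {a..b} (\<lambda>x. f x y))"
    and "(\<integral>\<^sup>+y\<in>{c..d}. (\<integral>\<^sup>+x\<in>{a..b}. ennreal (f x y) \<partial>lborel) \<partial>lborel)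
       = ennreal (integral {c..d} (\<lambda>y. integral {a..b} (\<lambda>x. f x y)))"
proof -
  note cont_x = continuous_on_interval_section[OF cont]
  have inner_nonneg: "0 \<le> integral {a..b} (\<lambda>x. f x y)" if "y \<in> {c..d}" for y
    using cont_x[OF that] nonneg that by (intro integral_nonneg integrable_continuous_interval) auto
  note cont_y = continuous_on_integral_interval_param[OF cont]
  show "0 \<le> integral {c..d} (\<lambda>y. integral {a..b} (\<lambda>x. f x y))"
    by (rule integral_nonneg[OF integrable_continuous_interval[OF cont_y]]) (use inner_nonneg in auto)
  have "(\<integral>\<^sup>+y\<in>{c..d}. (\<integral>\<^sup>+x\<in>{a..b}. ennreal (f x y) \<partial>lborel) \<partial>lborel)
      = (\<integral>\<^sup>+y\<in>{c..d}. ennreal (integral {a..b} (\<lambda>x. f x y)) \<partial>lborel)"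
    using cont_x nonneg by (intro set_nn_integral_cong nn_integral_interval_continuous) auto
  also have "\<dots> = ennreal (integral {c..d} (\<lambda>y. integral {a..b} (\<lambda>x. f x y)))"
    using cont_y inner_nonneg by (rule nn_integral_interval_continuous)
  finally show "(\<integral>\<^sup>+y\<in>{c..d}. (\<integral>\<^sup>+x\<in>{a..b}. ennreal (f x y) \<partial>lborel) \<partial>lborel)
       = ennreal (integral {c..d} (\<lambda>y. integral {a..b} (\<lambda>x. f x y)))" .
qed

section \<open>Lebesgue integrals on the half-line\<close>

lemma set_nn_integral_mono_set:
  "A \<subseteq> B \<Longrightarrow> (\<integral>\<^sup>+x\<in>A. f x \<partial>M) \<le> (\<integral>\<^sup>+x\<in>B. f x \<partial>M)"
  by (intro nn_integral_mono) (auto split: split_indicator)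

lemma iterated_nn_integral_mono_set:
  "A \<subseteq> B \<Longrightarrow> (\<integral>\<^sup>+y\<in>C. (\<integral>\<^sup>+x\<in>A. f x y \<partial>M) \<partial>N) \<le> (\<integral>\<^sup>+y\<in>C. (\<integral>\<^sup>+x\<in>B. f x y \<partial>M) \<partial>N)"
  by (intro nn_integral_mono mult_right_mono set_nn_integral_mono_set) auto

lemma borel_measurable_continuous_on_indicator_ennreal:
  fixes f :: "real \<Rightarrow> real"
  assumes "S \<in> sets borel" "continuous_on S f"
  shows "(\<lambda>x. ennreal (f x) * indicator S x) \<in> borel_measurable lborel"
proof -
  have "(\<lambda>x. ennreal (indicator S x *\<^sub>R f x)) \<in> borel_measurable borel"
    using borel_measurable_continuous_on_indicator[OF assms] by measurable
  also have "(\<lambda>x. ennreal (indicator S x *\<^sub>R f x)) = (\<lambda>x. ennreal (f x) * indicator S x)"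
    by (auto split: split_indicator)
  finally show ?thesis
    by simp
qed

lemma borel_measurable_nn_integral_interval_continuous:
  fixes f :: "real \<Rightarrow> real \<Rightarrow> real"
  assumes cont: "continuous_on ({a..b} \<times> {c..d}) (\<lambda>(x, y). f x y)"
    and nonneg: "\<And>x y. x \<in> {a..b} \<Longrightarrow> y \<in> {c..d} \<Longrightarrow> 0 \<le> f x y"
  shows "(\<lambda>y. (\<integral>\<^sup>+x\<in>{a..b}. ennreal (f x y) \<partial>lborel) * indicator {c..d} y) \<in> borel_measurable lborel"
proof -
  have "(\<lambda>y. ennreal (integral {a..b} (\<lambda>x. f x y)) * indicator {c..d} y) \<in> borel_measurable lborel"
    using cont by (intro borel_measurable_continuous_on_indicator_ennreal continuous_on_integral_interval_param) auto
  also have "(\<lambda>y. ennreal (integral {a..b} (\<lambda>x. f x y)) * indicator {c..d} y)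
      = (\<lambda>y. (\<integral>\<^sup>+x\<in>{a..b}. ennreal (f x y) \<partial>lborel) * indicator {c..d} y)"
    using continuous_on_interval_section[OF cont] nonneg
    by (auto simp: fun_eq_iff split: split_indicator intro!: nn_integral_interval_continuous[symmetric])
  finally show ?thesis .
qed

lemma AE_le_imp_le_continuous:
  fixes f :: "real \<Rightarrow> real"
  assumes ae: "AE x in lborel. x \<in> S \<longrightarrow> f x \<le> M"
    and "open S" "continuous_on S f" "x \<in> S"
  shows "f x \<le> M"
proof (rule ccontr)
  assume "\<not> f x \<le> M"
  have "open (S \<inter> f -` {M<..})"
    using assms by (intro continuous_open_preimage) auto
  moreover have "x \<in> S \<inter> f -` {M<..}" using \<open>\<not> f x \<le> M\<close> \<open>x \<in> S\<close> by auto
  ultimately obtain e where e: "0 < e" "ball x e \<subseteq> S \<inter> f -` {M<..}"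
    using open_contains_ball by blast
  have "AE y in lborel. y \<notin> ball x e"
    using ae by (rule AE_mp) (use e in \<open>auto intro!: AE_I2\<close>)
  then have "emeasure lborel (ball x e) = 0"
    by (subst AE_iff_measurable[symmetric]) auto
  then show False using e by (simp add: ball_eq_greaterThanLessThan)
qed

lemma nn_integral_SUP_incseq_sets:
  fixes f :: "'a \<Rightarrow> ennreal"
  assumes "incseq K" "(\<Union>k. K k) = S"
    and "\<And>k. (\<lambda>x. f x * indicator (K k) x) \<in> borel_measurable M"
  shows "(\<integral>\<^sup>+x\<in>S. f x \<partial>M) = (SUP k. \<integral>\<^sup>+x\<in>K k. f x \<partial>M)"
proof -
  have "incseq (\<lambda>k x. f x * indicator (K k) x)"
    using assms(1) by (auto simp: incseq_def le_fun_def split: split_indicator)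
  moreover have "(SUP k. f x * indicator (K k) x) = f x * indicator S x" for x
  proof (cases "x \<in> S")
    case True
    then obtain k where "x \<in> K k"
      using assms(2) by auto
    then show ?thesis
      using True assms(2) by (intro antisym SUP_least SUP_upper2[of k]) (auto split: split_indicator)
  next
    case False
    then show ?thesis
      using assms(2) by (auto split: split_indicator)
  qed
  ultimately show ?thesis
    using nn_integral_monotone_convergence_SUP[of "\<lambda>k x. f x * indicator (K k) x"] assms(3)
    by simp
qed

lemma iterated_nn_integral_SUP_incseq_sets:
  fixes f :: "'a \<Rightarrow> 'b \<Rightarrow> ennreal"
  assumes "incseq K" "(\<Union>k. K k) = S"
    and "\<And>k y. y \<in> C \<Longrightarrow> (\<lambda>x. f x y * indicator (K k) x) \<in> borel_measurable M"
    and "\<And>k. (\<lambda>y. (\<integral>\<^sup>+x\<in>K k. f x y \<partial>M) * indicator C y) \<in> borel_measurable N"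
  shows "(\<integral>\<^sup>+y\<in>C. (\<integral>\<^sup>+x\<in>S. f x y \<partial>M) \<partial>N) = (SUP k. \<integral>\<^sup>+y\<in>C. (\<integral>\<^sup>+x\<in>K k. f x y \<partial>M) \<partial>N)"
proof -
  have "(\<integral>\<^sup>+y\<in>C. (\<integral>\<^sup>+x\<in>S. f x y \<partial>M) \<partial>N)
      = (\<integral>\<^sup>+y. (SUP k. (\<integral>\<^sup>+x\<in>K k. f x y \<partial>M) * indicator C y) \<partial>N)"
  proof (intro nn_integral_cong)
    fix y
    show "(\<integral>\<^sup>+x\<in>S. f x y \<partial>M) * indicator C y = (SUP k. (\<integral>\<^sup>+x\<in>K k. f x y \<partial>M) * indicator C y)"
    proof (cases "y \<in> C")
      case True
      then show ?thesis
        using nn_integral_SUP_incseq_sets[OF assms(1,2) assms(3)[OF True]] by simp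
    qed simp
  qed
  also have "\<dots> = (SUP k. \<integral>\<^sup>+y\<in>C. (\<integral>\<^sup>+x\<in>K k. f x y \<partial>M) \<partial>N)"
  proof (rule nn_integral_monotone_convergence_SUP[OF _ assms(4)])
    show "incseq (\<lambda>k y. (\<integral>\<^sup>+x\<in>K k. f x y \<partial>M) * indicator C y)"
      using assms(1)
      by (auto simp: incseq_def le_fun_def intro!: mult_right_mono set_nn_integral_mono_set)
  qed
  finally show ?thesis .
qed

definition positive_exhaustion :: "nat \<Rightarrow> real set" where
  "positive_exhaustion k = {1 / (real k + 1) .. real k + 1}"

lemma incseq_positive_exhaustion: "incseq positive_exhaustion"
proof (rule incseq_SucI)
  fix k
  have "1 / (real k + 2) \<le> 1 / (real k + 1)"
    by (intro divide_left_mono) auto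
  then show "positive_exhaustion k \<subseteq> positive_exhaustion (Suc k)"
    by (auto simp: positive_exhaustion_def add.commute)
qed

lemma UN_positive_exhaustion: "(\<Union>k. positive_exhaustion k) = {0<..}"
proof (intro equalityI subsetI)
  fix x :: real assume "x \<in> {0<..}"
  obtain k :: nat where k: "max x (1 / x) < k"
    using reals_Archimedean2 by blast
  then have "1 / (real k + 1) \<le> x"
    using \<open>x \<in> {0<..}\<close> by (simp add: field_simps)
  with k show "x \<in> (\<Union>k. positive_exhaustion k)"
    by (auto simp: positive_exhaustion_def)
next
  fix x assume "x \<in> (\<Union>k. positive_exhaustion k)"
  then obtain k where "1 / (real k + 1) \<le> x"
    by (auto simp: positive_exhaustion_def)
  moreover have "0 < 1 / (real k + 1)"
    by simp
  ultimately have "0 < x"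
    by linarith
  then show "x \<in> {0<..}"
    by simp
qed

lemma positive_exhaustion_subset: "positive_exhaustion k \<subseteq> {0<..}"
  using UN_positive_exhaustion by blast

lemma nn_integral_SUP_positive_exhaustion:
  fixes f :: "real \<Rightarrow> real"
  assumes "continuous_on {0<..} f"
  shows "(\<integral>\<^sup>+x\<in>{0<..}. ennreal (f x) \<partial>lborel)
       = (SUP k. \<integral>\<^sup>+x\<in>positive_exhaustion k. ennreal (f x) \<partial>lborel)"
  using incseq_positive_exhaustion UN_positive_exhaustion
proof (rule nn_integral_SUP_incseq_sets)
  fix k
  have "continuous_on (positive_exhaustion k) f"
    using assms positive_exhaustion_subset by (rule continuous_on_subset)
  then show "(\<lambda>x. ennreal (f x) * indicator (positive_exhaustion k) x) \<in> borel_measurable lborel"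
    by (intro borel_measurable_continuous_on_indicator_ennreal) (auto simp: positive_exhaustion_def)
qed

lemma iterated_nn_integral_SUP_positive_exhaustion:
  fixes f :: "real \<Rightarrow> real \<Rightarrow> real"
  assumes cont: "continuous_on ({0<..} \<times> {c..d}) (\<lambda>(x, y). f x y)"
    and nonneg: "\<And>x y. 0 < x \<Longrightarrow> y \<in> {c..d} \<Longrightarrow> 0 \<le> f x y"
  shows "(\<integral>\<^sup>+y\<in>{c..d}. (\<integral>\<^sup>+x\<in>{0<..}. ennreal (f x y) \<partial>lborel) \<partial>lborel)
       = (SUP k. \<integral>\<^sup>+y\<in>{c..d}. (\<integral>\<^sup>+x\<in>positive_exhaustion k. ennreal (f x y) \<partial>lborel) \<partial>lborel)"
  using incseq_positive_exhaustion UN_positive_exhaustion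
proof (rule iterated_nn_integral_SUP_incseq_sets)
  fix k
  have cont_k: "continuous_on (positive_exhaustion k \<times> {c..d}) (\<lambda>(x, y). f x y)"
    using positive_exhaustion_subset by (intro continuous_on_subset[OF cont]) auto
  have nonneg_k: "0 \<le> f x y" if "x \<in> positive_exhaustion k" "y \<in> {c..d}" for x y
    using nonneg positive_exhaustion_subset that by blast
  from cont_k show "(\<lambda>y. (\<integral>\<^sup>+x\<in>positive_exhaustion k. ennreal (f x y) \<partial>lborel) * indicator {c..d} y)
      \<in> borel_measurable lborel"
    using nonneg_k unfolding positive_exhaustion_def
    by (intro borel_measurable_nn_integral_interval_continuous) auto
  fix y assume "y \<in> {c..d}"
  with cont_k show "(\<lambda>x. ennreal (f x y) * indicator (positive_exhaustion k) x) \<in> borel_measurable lborel"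
    unfolding positive_exhaustion_def
    by (intro borel_measurable_continuous_on_indicator_ennreal continuous_on_interval_section) auto
qed

section \<open>Classical solutions and the energy identity\<close>

locale kompaneets_classical =
  fixes n nx nt :: "real \<Rightarrow> real \<Rightarrow> real"
  assumes continuous_n: "continuous_on ({0<..} \<times> {0<..}) (\<lambda>(x, t). n x t)"
    and continuous_nx: "continuous_on ({0<..} \<times> {0<..}) (\<lambda>(x, t). nx x t)"
    and continuous_nt: "continuous_on ({0<..} \<times> {0<..}) (\<lambda>(x, t). nt x t)"
    and has_derivative_x:
      "\<And>x t. 0 < x \<Longrightarrow> 0 < t \<Longrightarrow> ((\<lambda>y. n y t) has_real_derivative nx x t) (at x)"
    and has_derivative_t:
      "\<And>x t. 0 < x \<Longrightarrow> 0 < t \<Longrightarrow> ((\<lambda>\<tau>. n x \<tau>) has_real_derivative nt x t) (at t)"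
    and kompaneets_equation: "\<And>x t. 0 < x \<Longrightarrow> 0 < t \<Longrightarrow>
      ((\<lambda>y. kflux y (n y t) (nx y t)) has_real_derivative nt x t) (at x)"
    and nonneg: "\<And>x t. 0 < x \<Longrightarrow> 0 < t \<Longrightarrow> 0 \<le> n x t"
begin

lemma continuous_on_compose_solution [continuous_intros]:
  assumes "continuous_on A f" "continuous_on A g" "\<And>z. z \<in> A \<Longrightarrow> 0 < f z \<and> 0 < g z"
  shows "continuous_on A (\<lambda>z. n (f z) (g z))"
    and "continuous_on A (\<lambda>z. nx (f z) (g z))"
    and "continuous_on A (\<lambda>z. nt (f z) (g z))"
proof -
  have pair: "continuous_on A (\<lambda>z. (f z, g z))"
    using assms(1,2) by (intro continuous_intros)
  have range: "(\<lambda>z. (f z, g z)) ` A \<subseteq> {0<..} \<times> {0<..}"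
    using assms(3) by auto
  show "continuous_on A (\<lambda>z. n (f z) (g z))"
    using continuous_on_compose2[OF continuous_n pair range] by simp
  show "continuous_on A (\<lambda>z. nx (f z) (g z))"
    using continuous_on_compose2[OF continuous_nx pair range] by simp
  show "continuous_on A (\<lambda>z. nt (f z) (g z))"
    using continuous_on_compose2[OF continuous_nt pair range] by simp
qed

lemma AE_bounded_imp_bounded:
  assumes "AE x in lborel. 0 < x \<longrightarrow> \<bar>n x \<tau>\<bar> \<le> M" "0 < x" "0 < \<tau>"
  shows "n x \<tau> \<le> M"
proof (rule AE_le_imp_le_continuous[where f = "\<lambda>y. n y \<tau>" and S = "{0<..}"])
  show "AE y in lborel. y \<in> {0<..} \<longrightarrow> n y \<tau> \<le> M"
    using assms(1) by (rule AE_mp) (auto intro!: AE_I2)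
  show "continuous_on {0<..} (\<lambda>y. n y \<tau>)"
    using \<open>0 < \<tau>\<close> by (auto intro!: continuous_intros)
qed (use \<open>0 < x\<close> in auto)

text \<open>The energy flux is \<open>2 n J - (x\<^sup>2 - 2 x) n\<^sup>2 - 2/3 n\<^sup>3\<close>; by the equation
  \<open>n\<^sub>t = J\<^sub>x\<close> its \<open>x\<close>-derivative contains \<open>2 n n\<^sub>t\<close> but no second derivative of \<open>n\<close>.\<close>
definition energy_flux :: "real \<Rightarrow> real \<Rightarrow> real" where
  "energy_flux x \<tau> = 2 * x\<^sup>2 * n x \<tau> * nx x \<tau> + (x\<^sup>2 - 2 * x) * (n x \<tau>)\<^sup>2 + 4/3 * (n x \<tau>) ^ 3"

lemma has_real_derivative_energy_flux:
  assumes "0 < x" "0 < \<tau>"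
  shows "((\<lambda>y. energy_flux y \<tau>) has_real_derivative
     2 * n x \<tau> * nt x \<tau> + 2 * x\<^sup>2 * (nx x \<tau>)\<^sup>2 - (2 * x - 2) * (n x \<tau>)\<^sup>2) (at x)"
proof -
  have "(\<lambda>y. energy_flux y \<tau>)
      = (\<lambda>y. 2 * n y \<tau> * kflux y (n y \<tau>) (nx y \<tau>) - (y\<^sup>2 - 2 * y) * (n y \<tau>)\<^sup>2 - 2/3 * (n y \<tau>) ^ 3)"
    by (auto simp: energy_flux_def kflux_def power2_eq_square power3_eq_cube algebra_simps)
  moreover have "((\<lambda>y. 2 * n y \<tau> * kflux y (n y \<tau>) (nx y \<tau>) - (y\<^sup>2 - 2 * y) * (n y \<tau>)\<^sup>2
        - 2/3 * (n y \<tau>) ^ 3) has_real_derivative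
      2 * nx x \<tau> * kflux x (n x \<tau>) (nx x \<tau>) + 2 * n x \<tau> * nt x \<tau>
      - ((2 * x - 2) * (n x \<tau>)\<^sup>2 + (x\<^sup>2 - 2 * x) * (2 * n x \<tau> * nx x \<tau>))
      - 2/3 * (3 * (n x \<tau>)\<^sup>2 * nx x \<tau>)) (at x)"
    using has_derivative_x[OF assms] kompaneets_equation[OF assms]
    by (auto intro!: derivative_eq_intros simp: power2_eq_square algebra_simps)
  ultimately show ?thesis
    by (auto simp: kflux_def power2_eq_square algebra_simps elim!: DERIV_cong)
qed

lemma has_integral_energy_flux:
  assumes "0 < a" "a \<le> b" "0 < \<tau>"
  shows "((\<lambda>x. 2 * n x \<tau> * nt x \<tau> + 2 * x\<^sup>2 * (nx x \<tau>)\<^sup>2 - (2 * x - 2) * (n x \<tau>)\<^sup>2)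
      has_integral energy_flux b \<tau> - energy_flux a \<tau>) {a..b}"
proof (rule fundamental_theorem_of_calculus[OF \<open>a \<le> b\<close>])
  fix x assume "x \<in> {a..b}"
  with assms have "0 < x" by simp
  then show "((\<lambda>y. energy_flux y \<tau>) has_vector_derivative
      2 * n x \<tau> * nt x \<tau> + 2 * x\<^sup>2 * (nx x \<tau>)\<^sup>2 - (2 * x - 2) * (n x \<tau>)\<^sup>2) (at x within {a..b})"
    using has_real_derivative_energy_flux[OF _ \<open>0 < \<tau>\<close>]
    by (simp add: has_real_derivative_iff_has_vector_derivative has_vector_derivative_at_within)
qed

lemma has_integral_time_derivative_sq:
  assumes "0 < x" "0 < s" "s \<le> t"
  shows "((\<lambda>\<tau>. 2 * n x \<tau> * nt x \<tau>) has_integral (n x t)\<^sup>2 - (n x s)\<^sup>2) {s..t}"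
proof (rule fundamental_theorem_of_calculus[OF \<open>s \<le> t\<close>])
  fix \<tau> assume "\<tau> \<in> {s..t}"
  with assms have "0 < \<tau>" by simp
  then have "((\<lambda>\<sigma>. (n x \<sigma>)\<^sup>2) has_real_derivative 2 * n x \<tau> * nt x \<tau>) (at \<tau>)"
    using has_derivative_t[OF \<open>0 < x\<close>] by (auto intro!: derivative_eq_intros)
  then show "((\<lambda>\<sigma>. (n x \<sigma>)\<^sup>2) has_vector_derivative 2 * n x \<tau> * nt x \<tau>) (at \<tau> within {s..t})"
    by (simp add: has_real_derivative_iff_has_vector_derivative has_vector_derivative_at_within)
qed

lemma integral_sq_increment:
  assumes "0 < \<epsilon>" "\<epsilon> \<le> R" "0 < s" "s \<le> t"
  shows "integral {\<epsilon>..R} (\<lambda>x. (n x t)\<^sup>2) - integral {\<epsilon>..R} (\<lambda>x. (n x s)\<^sup>2)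
       = integral {s..t} (\<lambda>\<tau>. integral {\<epsilon>..R} (\<lambda>x. 2 * n x \<tau> * nt x \<tau>))"
proof -
  have "integral {\<epsilon>..R} (\<lambda>x. (n x t)\<^sup>2) - integral {\<epsilon>..R} (\<lambda>x. (n x s)\<^sup>2)
      = integral {\<epsilon>..R} (\<lambda>x. (n x t)\<^sup>2 - (n x s)\<^sup>2)"
    using assms by (intro integral_diff[symmetric] integrable_continuous_interval)
      (auto intro!: continuous_intros)
  also have "\<dots> = integral {\<epsilon>..R} (\<lambda>x. integral {s..t} (\<lambda>\<tau>. 2 * n x \<tau> * nt x \<tau>))"
    using assms by (intro integral_cong integral_unique[symmetric] has_integral_time_derivative_sq) auto
  also have "\<dots> = integral {s..t} (\<lambda>\<tau>. integral {\<epsilon>..R} (\<lambda>x. 2 * n x \<tau> * nt x \<tau>))"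
    using assms by (intro integral_swap_interval) (auto simp: case_prod_beta' intro!: continuous_intros)
  finally show ?thesis .
qed

lemma integral_energy_balance:
  assumes "0 < \<epsilon>" "\<epsilon> \<le> R" "0 < \<tau>"
  shows "integral {\<epsilon>..R} (\<lambda>x. 2 * n x \<tau> * nt x \<tau>)
       = energy_flux R \<tau> - energy_flux \<epsilon> \<tau>
         - 2 * integral {\<epsilon>..R} (\<lambda>x. (n x \<tau>)\<^sup>2 + x\<^sup>2 * (nx x \<tau>)\<^sup>2)
         + 2 * integral {\<epsilon>..R} (\<lambda>x. x * (n x \<tau>)\<^sup>2)"
proof (rule integral_unique)
  have flux: "((\<lambda>x. 2 * n x \<tau> * nt x \<tau> + 2 * x\<^sup>2 * (nx x \<tau>)\<^sup>2 - (2 * x - 2) * (n x \<tau>)\<^sup>2)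
      has_integral energy_flux R \<tau> - energy_flux \<epsilon> \<tau>) {\<epsilon>..R}"
    using assms by (intro has_integral_energy_flux)
  have dissipation: "((\<lambda>x. (n x \<tau>)\<^sup>2 + x\<^sup>2 * (nx x \<tau>)\<^sup>2) has_integral
      integral {\<epsilon>..R} (\<lambda>x. (n x \<tau>)\<^sup>2 + x\<^sup>2 * (nx x \<tau>)\<^sup>2)) {\<epsilon>..R}"
    and production: "((\<lambda>x. x * (n x \<tau>)\<^sup>2) has_integral integral {\<epsilon>..R} (\<lambda>x. x * (n x \<tau>)\<^sup>2)) {\<epsilon>..R}"
    using assms by (intro integrable_integral integrable_continuous_interval; auto intro!: continuous_intros)+
  have integrand: "(\<lambda>x. 2 * n x \<tau> * nt x \<tau>)
      = (\<lambda>x. (2 * n x \<tau> * nt x \<tau> + 2 * x\<^sup>2 * (nx x \<tau>)\<^sup>2 - (2 * x - 2) * (n x \<tau>)\<^sup>2)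
        - 2 * ((n x \<tau>)\<^sup>2 + x\<^sup>2 * (nx x \<tau>)\<^sup>2) + 2 * (x * (n x \<tau>)\<^sup>2))"
    by (simp add: fun_eq_iff algebra_simps)
  show "((\<lambda>x. 2 * n x \<tau> * nt x \<tau>) has_integral
      energy_flux R \<tau> - energy_flux \<epsilon> \<tau>
      - 2 * integral {\<epsilon>..R} (\<lambda>x. (n x \<tau>)\<^sup>2 + x\<^sup>2 * (nx x \<tau>)\<^sup>2)
      + 2 * integral {\<epsilon>..R} (\<lambda>x. x * (n x \<tau>)\<^sup>2)) {\<epsilon>..R}"
    unfolding integrand
    by (rule has_integral_add[OF has_integral_diff[OF flux has_integral_mult_right[OF dissipation]]
        has_integral_mult_right[OF production]])
qed

lemma energy_identity:
  assumes "0 < \<epsilon>" "\<epsilon> \<le> R" "0 < s" "s \<le> t"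
  shows "integral {\<epsilon>..R} (\<lambda>x. (n x t)\<^sup>2)
       + 2 * integral {s..t} (\<lambda>\<tau>. integral {\<epsilon>..R} (\<lambda>x. (n x \<tau>)\<^sup>2 + x\<^sup>2 * (nx x \<tau>)\<^sup>2))
     = integral {\<epsilon>..R} (\<lambda>x. (n x s)\<^sup>2)
       + 2 * integral {s..t} (\<lambda>\<tau>. integral {\<epsilon>..R} (\<lambda>x. x * (n x \<tau>)\<^sup>2))
       + integral {s..t} (\<lambda>\<tau>. energy_flux R \<tau> - energy_flux \<epsilon> \<tau>)"
proof -
  define D where "D \<tau> = integral {\<epsilon>..R} (\<lambda>x. (n x \<tau>)\<^sup>2 + x\<^sup>2 * (nx x \<tau>)\<^sup>2)" for \<tau>
  define X where "X \<tau> = integral {\<epsilon>..R} (\<lambda>x. x * (n x \<tau>)\<^sup>2)" for \<tau>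
  have "continuous_on {s..t} D" "continuous_on {s..t} X"
    unfolding D_def X_def using assms
    by (auto intro!: continuous_on_integral_interval_param continuous_intros simp: case_prod_beta')
  moreover have "continuous_on {s..t} (\<lambda>\<tau>. energy_flux R \<tau> - energy_flux \<epsilon> \<tau>)"
    unfolding energy_flux_def using assms by (auto intro!: continuous_intros)
  ultimately have "integral {s..t} (\<lambda>\<tau>. energy_flux R \<tau> - energy_flux \<epsilon> \<tau> - 2 * D \<tau> + 2 * X \<tau>)
      = integral {s..t} (\<lambda>\<tau>. energy_flux R \<tau> - energy_flux \<epsilon> \<tau>)
        - 2 * integral {s..t} D + 2 * integral {s..t} X"
    by (simp add: integral_add integral_diff integrable_continuous_interval integrable_diff
        integrable_add integrable_on_cmult_left)
  moreover have "integral {s..t} (\<lambda>\<tau>. integral {\<epsilon>..R} (\<lambda>x. 2 * n x \<tau> * nt x \<tau>))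
      = integral {s..t} (\<lambda>\<tau>. energy_flux R \<tau> - energy_flux \<epsilon> \<tau> - 2 * D \<tau> + 2 * X \<tau>)"
    unfolding D_def X_def using assms by (intro integral_cong integral_energy_balance) auto
  ultimately show ?thesis
    using integral_sq_increment[OF assms] unfolding D_def X_def by linarith
qed

end

section \<open>Boundary terms and the energy inequality on a time slab\<close>

locale kompaneets_slab = kompaneets_classical +
  fixes s t M :: real
  assumes slab: "0 < s" "s < t"
    and bounded: "\<And>x \<tau>. 0 < x \<Longrightarrow> \<tau> \<in> {s..t} \<Longrightarrow> n x \<tau> \<le> M"
begin

definition sq_integral :: "real \<Rightarrow> real" where
  "sq_integral x = integral {s..t} (\<lambda>\<tau>. (n x \<tau>)\<^sup>2)"

definition sq_integral_deriv :: "real \<Rightarrow> real" where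
  "sq_integral_deriv x = integral {s..t} (\<lambda>\<tau>. 2 * n x \<tau> * nx x \<tau>)"

definition cube_integral :: "real \<Rightarrow> real" where
  "cube_integral x = integral {s..t} (\<lambda>\<tau>. (n x \<tau>) ^ 3)"

definition boundary_flux :: "real \<Rightarrow> real" where
  "boundary_flux x = integral {s..t} (energy_flux x)"

lemma has_real_derivative_sq_integral:
  assumes "0 < x"
  shows "(sq_integral has_real_derivative sq_integral_deriv x) (at x)"
proof -
  have "((\<lambda>x. integral (cbox s t) (\<lambda>\<tau>. (n x \<tau>)\<^sup>2)) has_field_derivative
      integral (cbox s t) (\<lambda>\<tau>. 2 * n x \<tau> * nx x \<tau>)) (at x within {0<..})"
  proof (rule leibniz_rule_field_derivative)
    fix y \<tau> :: real assume "y \<in> {0<..}" "\<tau> \<in> cbox s t"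
    then have "0 < y" "0 < \<tau>" using slab by auto
    then have "((\<lambda>y. (n y \<tau>)\<^sup>2) has_real_derivative 2 * n y \<tau> * nx y \<tau>) (at y)"
      using has_derivative_x by (auto intro!: derivative_eq_intros)
    then show "((\<lambda>y. (n y \<tau>)\<^sup>2) has_field_derivative 2 * n y \<tau> * nx y \<tau>) (at y within {0<..})"
      by (rule has_field_derivative_at_within)
  next
    fix y :: real assume "y \<in> {0<..}"
    then show "(\<lambda>\<tau>. (n y \<tau>)\<^sup>2) integrable_on cbox s t"
      using slab by (auto simp: cbox_interval intro!: integrable_continuous_interval continuous_intros)
  next
    show "continuous_on ({0<..} \<times> cbox s t) (\<lambda>(x, \<tau>). 2 * n x \<tau> * nx x \<tau>)"
      using slab by (auto simp: cbox_interval case_prod_beta' intro!: continuous_intros)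
  qed (use assms in auto)
  then show ?thesis
    unfolding sq_integral_def[abs_def] sq_integral_deriv_def
    using at_within_open[of x "{0<..}"] assms by (simp add: cbox_interval)
qed

lemma continuous_on_sq_integral: "A \<subseteq> {0<..} \<Longrightarrow> continuous_on A sq_integral"
  by (rule DERIV_continuous_on[of _ _ sq_integral_deriv])
     (auto intro: has_field_derivative_at_within has_real_derivative_sq_integral)

lemma boundary_flux_eq:
  assumes "0 < x"
  shows "boundary_flux x = x\<^sup>2 * sq_integral_deriv x + x\<^sup>2 * sq_integral x
    - 2 * (x * sq_integral x) + 4/3 * cube_integral x"
proof -
  have "energy_flux x
      = (\<lambda>\<tau>. x\<^sup>2 * (2 * n x \<tau> * nx x \<tau>) + (x\<^sup>2 - 2 * x) * (n x \<tau>)\<^sup>2 + 4/3 * (n x \<tau>) ^ 3)"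
    by (auto simp: energy_flux_def algebra_simps)
  then have "boundary_flux x
      = x\<^sup>2 * sq_integral_deriv x + (x\<^sup>2 - 2 * x) * sq_integral x + 4/3 * cube_integral x"
    unfolding boundary_flux_def sq_integral_def sq_integral_deriv_def cube_integral_def
    using assms slab
    by (simp, subst integral_add integral_mult_right,
        auto intro!: integrable_continuous_interval continuous_intros)+
  then show ?thesis
    by (simp add: algebra_simps)
qed

lemma sq_integral_bounds:
  assumes "0 < x"
  shows "0 \<le> sq_integral x" "sq_integral x \<le> M\<^sup>2 * (t - s)"
    and "0 \<le> cube_integral x" "cube_integral x \<le> M * sq_integral x"
proof -
  have range: "0 \<le> n x \<tau> \<and> n x \<tau> \<le> M" if "\<tau> \<in> {s..t}" for \<tau>
    using nonneg bounded assms that slab by force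
  have integrable: "(\<lambda>\<tau>. (n x \<tau>)\<^sup>2) integrable_on {s..t}" "(\<lambda>\<tau>. (n x \<tau>) ^ 3) integrable_on {s..t}"
    using assms slab by (auto intro!: integrable_continuous_interval continuous_intros)
  show "0 \<le> sq_integral x"
    unfolding sq_integral_def using integrable by (intro integral_nonneg) auto
  show "0 \<le> cube_integral x"
    unfolding cube_integral_def using integrable range by (intro integral_nonneg) auto
  have "sq_integral x \<le> integral {s..t} (\<lambda>\<tau>. M\<^sup>2)"
    unfolding sq_integral_def using integrable range
    by (intro integral_le) (auto intro!: power_mono)
  then show "sq_integral x \<le> M\<^sup>2 * (t - s)"
    using slab by (simp add: mult.commute)
  have "cube_integral x \<le> integral {s..t} (\<lambda>\<tau>. M * (n x \<tau>)\<^sup>2)"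
    unfolding cube_integral_def
  proof (rule integral_le)
    fix \<tau> assume "\<tau> \<in> {s..t}"
    with range have "0 \<le> n x \<tau>" "n x \<tau> \<le> M" by auto
    then show "(n x \<tau>) ^ 3 \<le> M * (n x \<tau>)\<^sup>2"
      using mult_right_mono[of "n x \<tau>" M "(n x \<tau>)\<^sup>2"]
      by (simp add: power2_eq_square power3_eq_cube mult.assoc)
  qed (use integrable in \<open>auto intro: integrable_on_cmult_left[where 'b=real, simplified]\<close>)
  then show "cube_integral x \<le> M * sq_integral x"
    by (simp add: sq_integral_def)
qed

lemma sq_integral_deriv_bound:
  assumes "0 < x" "\<delta> \<le> - boundary_flux x" "x * (M\<^sup>2 * (t - s)) \<le> \<delta> / 4"
  shows "x\<^sup>2 * sq_integral_deriv x \<le> - \<delta> / 2"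
proof -
  note bounds = sq_integral_bounds[OF \<open>0 < x\<close>]
  have "x * sq_integral x \<le> x * (M\<^sup>2 * (t - s))"
    using bounds \<open>0 < x\<close> by (intro mult_left_mono) auto
  moreover have "0 \<le> x\<^sup>2 * sq_integral x"
    using bounds by simp
  ultimately show ?thesis
    using assms(2,3) boundary_flux_eq[OF \<open>0 < x\<close>] bounds by linarith
qed

lemma boundary_flux_small_near_zero:
  assumes "0 < \<delta>" "0 < e0"
  shows "\<exists>\<epsilon>. 0 < \<epsilon> \<and> \<epsilon> < e0 \<and> - boundary_flux \<epsilon> < \<delta>"
proof (rule ccontr)
  assume "\<not> ?thesis"
  then have flux_large: "\<delta> \<le> - boundary_flux \<epsilon>" if "0 < \<epsilon>" "\<epsilon> < e0" for \<epsilon>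
    using that by force
  define H where "H = M\<^sup>2 * (t - s)"
  have "0 \<le> H"
    using sq_integral_bounds[of 1] by (simp add: H_def)
  define b where "b = min e0 (\<delta> / (4 * H + 4)) / 2"
  have "0 < b" "b < e0" "b * H \<le> \<delta> / 4"
    using \<open>0 \<le> H\<close> assms by (auto simp: b_def field_simps min_def)
  define a where "a = min b (\<delta> / (2 * (H + \<delta> / b + 1)))"
  have "0 < 2 * (H + \<delta> / b + 1)"
    using \<open>0 \<le> H\<close> \<open>0 < \<delta>\<close> \<open>0 < b\<close> by (simp add: add_nonneg_pos)
  then have "0 < a" "a \<le> b" "a * (2 * (H + \<delta> / b + 1)) \<le> \<delta>"
    using \<open>0 < b\<close> \<open>0 < \<delta>\<close> pos_le_divide_eq[of "2 * (H + \<delta> / b + 1)" a \<delta>]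
    by (auto simp: a_def simp del: mult_pos_pos)
  have "sq_integral b - sq_integral a \<le> \<delta> / (2 * b) - \<delta> / (2 * a)"
  proof (rule DERIV_le_imp_diff_le[OF \<open>a \<le> b\<close>])
    fix x assume "x \<in> {a..b}"
    then have "0 < x" "x * H \<le> \<delta> / 4"
      using \<open>0 < a\<close> \<open>b * H \<le> \<delta> / 4\<close> \<open>0 \<le> H\<close> mult_right_mono[of x b H] by auto
    show "(sq_integral has_real_derivative sq_integral_deriv x) (at x)"
      using \<open>0 < x\<close> by (rule has_real_derivative_sq_integral)
    show "((\<lambda>x. \<delta> / (2 * x)) has_real_derivative - \<delta> / (2 * x\<^sup>2)) (at x)"
      using \<open>0 < x\<close> by (auto intro!: derivative_eq_intros simp: power2_eq_square field_simps)
    have "x\<^sup>2 * sq_integral_deriv x \<le> - \<delta> / 2"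
      using \<open>0 < x\<close> \<open>x * H \<le> \<delta> / 4\<close> \<open>x \<in> {a..b}\<close> \<open>b < e0\<close> flux_large
      by (intro sq_integral_deriv_bound) (auto simp: H_def)
    with \<open>0 < x\<close> show "sq_integral_deriv x \<le> - \<delta> / (2 * x\<^sup>2)"
      by (simp add: field_simps)
  qed
  moreover have "0 \<le> sq_integral b" "sq_integral a \<le> H"
    using sq_integral_bounds \<open>0 < a\<close> \<open>0 < b\<close> by (auto simp: H_def)
  moreover have "H + \<delta> / b + 1 \<le> \<delta> / (2 * a)" "\<delta> / (2 * b) \<le> \<delta> / b"
    using \<open>0 < a\<close> \<open>0 < b\<close> \<open>0 < \<delta>\<close> \<open>a * (2 * (H + \<delta> / b + 1)) \<le> \<delta>\<close>
    by (simp_all add: field_simps)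
  ultimately show False
    by linarith
qed

lemma boundary_flux_le_weighted_sq_integral:
  assumes "1 \<le> R" "4/3 * M \<le> R"
  shows "boundary_flux R
    \<le> (2 * R * sq_integral R + R\<^sup>2 * sq_integral_deriv R) + 2 * (R\<^sup>2 * sq_integral R)"
proof -
  have "0 < R" "R \<le> R\<^sup>2"
    using assms by (auto simp: power2_eq_square)
  note bounds = sq_integral_bounds[OF \<open>0 < R\<close>]
  have "4/3 * cube_integral R \<le> 4/3 * M * sq_integral R"
    using bounds by simp
  also have "\<dots> \<le> R\<^sup>2 * sq_integral R"
    using assms \<open>R \<le> R\<^sup>2\<close> bounds by (intro mult_right_mono) auto
  finally have "4/3 * cube_integral R \<le> R\<^sup>2 * sq_integral R" .
  moreover have "0 \<le> R * sq_integral R"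
    using bounds \<open>0 < R\<close> by simp
  ultimately show ?thesis
    using boundary_flux_eq[OF \<open>0 < R\<close>] by linarith
qed

lemma weighted_sq_integral_large:
  assumes "0 < \<delta>" "1 \<le> R1" "4/3 * M \<le> R1"
    and flux_large: "\<And>R. R1 \<le> R \<Longrightarrow> \<delta> \<le> boundary_flux R"
    and "R1 + 1 \<le> R"
  shows "\<delta> / 4 \<le> R\<^sup>2 * sq_integral R"
proof -
  define g where "g R = R\<^sup>2 * sq_integral R" for R
  define E where "E = exp (2 * (R1 - R))"
  have "\<delta> / 2 + (g R1 - \<delta> / 2) * E \<le> g R"
    unfolding E_def
  proof (rule linear_differential_inequality[where
        g' = "\<lambda>R. 2 * R * sq_integral R + R\<^sup>2 * sq_integral_deriv R", of 2])
    fix y assume "R1 \<le> y"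
    then show "(g has_real_derivative 2 * y * sq_integral y + y\<^sup>2 * sq_integral_deriv y) (at y)"
      unfolding g_def using \<open>1 \<le> R1\<close> has_real_derivative_sq_integral[of y]
      by (auto intro!: derivative_eq_intros)
    show "\<delta> \<le> 2 * y * sq_integral y + y\<^sup>2 * sq_integral_deriv y + 2 * g y"
      using flux_large[OF \<open>R1 \<le> y\<close>] boundary_flux_le_weighted_sq_integral[of y] \<open>R1 \<le> y\<close> assms(2,3)
      by (simp add: g_def)
  qed (use \<open>R1 + 1 \<le> R\<close> in auto)
  moreover have "E \<le> 1 / 2"
  proof -
    have "E \<le> exp (-2)"
      using \<open>R1 + 1 \<le> R\<close> by (simp add: E_def)
    also have "\<dots> \<le> 1 / 2"
      using exp_ge_add_one_self[of 2] by (simp add: exp_minus field_simps)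
    finally show ?thesis .
  qed
  moreover have "- \<delta> / 2 * E \<le> (g R1 - \<delta> / 2) * E"
    using sq_integral_bounds[of R1] \<open>1 \<le> R1\<close> by (intro mult_right_mono) (auto simp: g_def E_def)
  moreover have "\<delta> / 2 * E \<le> \<delta> / 2 * (1 / 2)"
    using \<open>0 < \<delta>\<close> \<open>E \<le> 1 / 2\<close> by (intro mult_left_mono) auto
  ultimately have "\<delta> / 4 \<le> g R"
    by linarith
  then show ?thesis
    by (simp add: g_def)
qed

lemma boundary_flux_small_near_infinity:
  assumes production_bounded: "\<And>a b. 1 \<le> a \<Longrightarrow> a \<le> b \<Longrightarrow>
      integral {s..t} (\<lambda>\<tau>. integral {a..b} (\<lambda>x. x * (n x \<tau>)\<^sup>2)) \<le> C"
    and "0 < \<delta>"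
  shows "\<exists>R > R0. boundary_flux R < \<delta>"
proof (rule ccontr)
  assume "\<not> ?thesis"
  then have flux_large: "\<delta> \<le> boundary_flux R" if "R0 < R" for R
    using that by force
  define R1 where "R1 = max R0 (max 1 (4/3 * M)) + 1"
  have R1: "R0 < R1" "1 \<le> R1" "4/3 * M \<le> R1"
    by (auto simp: R1_def)
  define a where "a = R1 + 1"
  define b where "b = a * exp (4 * (\<bar>C\<bar> + 1) / \<delta>)"
  have "1 \<le> a" "a \<le> b"
    using R1 \<open>0 < \<delta>\<close> by (auto simp: a_def b_def)
  have "\<bar>C\<bar> + 1 = \<delta> / 4 * ln (b / a)"
    using \<open>1 \<le> a\<close> \<open>0 < \<delta>\<close> by (simp add: b_def)
  also have "\<dots> \<le> integral {a..b} (\<lambda>x. x * sq_integral x)"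
  proof (rule integral_ge_ln_ratio)
    show "continuous_on {a..b} (\<lambda>x. x * sq_integral x)"
      using \<open>1 \<le> a\<close> by (auto intro!: continuous_intros continuous_on_sq_integral)
    fix x assume "x \<in> {a..b}"
    then have "\<delta> / 4 \<le> x\<^sup>2 * sq_integral x" "0 < x"
      using weighted_sq_integral_large[OF \<open>0 < \<delta>\<close> R1(2,3)] flux_large R1(1) \<open>1 \<le> a\<close>
      by (auto simp: a_def)
    then show "\<delta> / 4 / x \<le> x * sq_integral x"
      by (simp add: power2_eq_square field_simps)
  qed (use \<open>1 \<le> a\<close> \<open>a \<le> b\<close> in auto)
  also have "\<dots> = integral {s..t} (\<lambda>\<tau>. integral {a..b} (\<lambda>x. x * (n x \<tau>)\<^sup>2))"
    unfolding sq_integral_def integral_mult_right[symmetric] using \<open>1 \<le> a\<close> slab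
    by (intro integral_swap_interval) (auto simp: case_prod_beta' intro!: continuous_intros)
  also have "\<dots> \<le> C"
    using production_bounded \<open>1 \<le> a\<close> \<open>a \<le> b\<close> .
  finally show False
    by simp
qed

lemma nn_energy_inequality_interval:
  assumes "0 < \<epsilon>" "\<epsilon> \<le> R"
  shows "(\<integral>\<^sup>+x\<in>{\<epsilon>..R}. ennreal ((n x t)\<^sup>2) \<partial>lborel)
       + (\<integral>\<^sup>+\<tau>\<in>{s..t}. (\<integral>\<^sup>+x\<in>{\<epsilon>..R}. ennreal ((n x \<tau>)\<^sup>2 + x\<^sup>2 * (nx x \<tau>)\<^sup>2) \<partial>lborel) \<partial>lborel)
     \<le> (\<integral>\<^sup>+x\<in>{\<epsilon>..R}. ennreal ((n x s)\<^sup>2) \<partial>lborel)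
       + 2 * (\<integral>\<^sup>+\<tau>\<in>{s..t}. (\<integral>\<^sup>+x\<in>{\<epsilon>..R}. ennreal (x * (n x \<tau>)\<^sup>2) \<partial>lborel) \<partial>lborel)
       + ennreal (boundary_flux R - boundary_flux \<epsilon>)"
proof -
  define It where "It = integral {\<epsilon>..R} (\<lambda>x. (n x t)\<^sup>2)"
  define Is where "Is = integral {\<epsilon>..R} (\<lambda>x. (n x s)\<^sup>2)"
  define JD where "JD = integral {s..t} (\<lambda>\<tau>. integral {\<epsilon>..R} (\<lambda>x. (n x \<tau>)\<^sup>2 + x\<^sup>2 * (nx x \<tau>)\<^sup>2))"
  define JX where "JX = integral {s..t} (\<lambda>\<tau>. integral {\<epsilon>..R} (\<lambda>x. x * (n x \<tau>)\<^sup>2))"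
  define D where "D = boundary_flux R - boundary_flux \<epsilon>"
  have rect: "continuous_on ({\<epsilon>..R} \<times> {s..t}) (\<lambda>(x, \<tau>). (n x \<tau>)\<^sup>2 + x\<^sup>2 * (nx x \<tau>)\<^sup>2)"
    "continuous_on ({\<epsilon>..R} \<times> {s..t}) (\<lambda>(x, \<tau>). x * (n x \<tau>)\<^sup>2)"
    using assms slab by (auto simp: case_prod_beta' intro!: continuous_intros)
  have JD: "0 \<le> JD" "(\<integral>\<^sup>+\<tau>\<in>{s..t}. (\<integral>\<^sup>+x\<in>{\<epsilon>..R}.
      ennreal ((n x \<tau>)\<^sup>2 + x\<^sup>2 * (nx x \<tau>)\<^sup>2) \<partial>lborel) \<partial>lborel) = ennreal JD"
    unfolding JD_def by (intro iterated_integral_interval_continuous[OF rect(1)]; simp)+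
  have JX: "0 \<le> JX" "(\<integral>\<^sup>+\<tau>\<in>{s..t}. (\<integral>\<^sup>+x\<in>{\<epsilon>..R}.
      ennreal (x * (n x \<tau>)\<^sup>2) \<partial>lborel) \<partial>lborel) = ennreal JX"
    unfolding JX_def using assms by (intro iterated_integral_interval_continuous[OF rect(2)]; simp)+
  have It: "(\<integral>\<^sup>+x\<in>{\<epsilon>..R}. ennreal ((n x t)\<^sup>2) \<partial>lborel) = ennreal It"
    and Is: "(\<integral>\<^sup>+x\<in>{\<epsilon>..R}. ennreal ((n x s)\<^sup>2) \<partial>lborel) = ennreal Is"
    unfolding It_def Is_def using assms slab
    by (auto intro!: nn_integral_interval_continuous continuous_intros)
  have "0 \<le> It" and Is_nonneg: "0 \<le> Is"
    unfolding It_def Is_def using assms slab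
    by (auto intro!: integral_nonneg integrable_continuous_interval continuous_intros)
  have "integral {s..t} (\<lambda>\<tau>. energy_flux R \<tau> - energy_flux \<epsilon> \<tau>) = D"
    unfolding D_def boundary_flux_def energy_flux_def using assms slab
    by (intro integral_diff integrable_continuous_interval) (auto intro!: continuous_intros)
  then have "It + JD \<le> Is + 2 * JX + D"
    using energy_identity[OF assms slab(1) less_imp_le[OF slab(2)]] JD(1)
    unfolding It_def Is_def JD_def JX_def by linarith
  then have "ennreal (It + JD) \<le> ennreal (Is + 2 * JX + max D 0)"
    by (intro ennreal_leI) linarith
  also have "\<dots> = ennreal Is + 2 * ennreal JX + ennreal D"
    using Is_nonneg JX(1) by (simp add: ennreal_mult max_def ennreal_neg)
  finally show ?thesis
    unfolding It Is JD(2) JX(2) D_def using \<open>0 \<le> It\<close> JD(1) by simp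
qed

lemma integral_production_le:
  assumes "0 < a" "a \<le> b"
  shows "ennreal (integral {s..t} (\<lambda>\<tau>. integral {a..b} (\<lambda>x. x * (n x \<tau>)\<^sup>2)))
    \<le> (\<integral>\<^sup>+\<tau>\<in>{s..t}. (\<integral>\<^sup>+x\<in>{0<..}. ennreal (x * (n x \<tau>)\<^sup>2) \<partial>lborel) \<partial>lborel)"
proof -
  have "ennreal (integral {s..t} (\<lambda>\<tau>. integral {a..b} (\<lambda>x. x * (n x \<tau>)\<^sup>2)))
      = (\<integral>\<^sup>+\<tau>\<in>{s..t}. (\<integral>\<^sup>+x\<in>{a..b}. ennreal (x * (n x \<tau>)\<^sup>2) \<partial>lborel) \<partial>lborel)"
    using assms slab
    by (intro iterated_integral_interval_continuous(2)[symmetric])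
       (auto simp: case_prod_beta' intro!: continuous_intros)
  also have "\<dots> \<le> (\<integral>\<^sup>+\<tau>\<in>{s..t}. (\<integral>\<^sup>+x\<in>{0<..}. ennreal (x * (n x \<tau>)\<^sup>2) \<partial>lborel) \<partial>lborel)"
    using assms by (intro iterated_nn_integral_mono_set) auto
  finally show ?thesis .
qed

lemma truncated_energy_inequality:
  assumes "0 < a" "a \<le> b"
    and production_finite:
      "(\<integral>\<^sup>+\<tau>\<in>{s..t}. (\<integral>\<^sup>+x\<in>{0<..}. ennreal (x * (n x \<tau>)\<^sup>2) \<partial>lborel) \<partial>lborel) \<noteq> \<infinity>"
  shows "(\<integral>\<^sup>+x\<in>{a..b}. ennreal ((n x t)\<^sup>2) \<partial>lborel)
       + (\<integral>\<^sup>+\<tau>\<in>{s..t}. (\<integral>\<^sup>+x\<in>{a..b}. ennreal ((n x \<tau>)\<^sup>2 + x\<^sup>2 * (nx x \<tau>)\<^sup>2) \<partial>lborel) \<partial>lborel)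
     \<le> (\<integral>\<^sup>+x\<in>{0<..}. ennreal ((n x s)\<^sup>2) \<partial>lborel)
       + 2 * (\<integral>\<^sup>+\<tau>\<in>{s..t}. (\<integral>\<^sup>+x\<in>{0<..}. ennreal (x * (n x \<tau>)\<^sup>2) \<partial>lborel) \<partial>lborel)"
    (is "?lhs \<le> ?initial + 2 * ?production")
proof (rule ennreal_le_epsilon)
  fix e :: real assume "0 < e"
  obtain C where C: "?production = ennreal C" "0 \<le> C"
    using production_finite by (cases ?production rule: ennreal_cases) auto
  have production_bounded: "integral {s..t} (\<lambda>\<tau>. integral {a'..b'} (\<lambda>x. x * (n x \<tau>)\<^sup>2)) \<le> C"
    if "1 \<le> a'" "a' \<le> b'" for a' b'
    using integral_production_le[of a' b'] that C by (simp add: ennreal_le_iff)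
  obtain \<epsilon> where \<epsilon>: "0 < \<epsilon>" "\<epsilon> < a" "- boundary_flux \<epsilon> < e / 2"
    using boundary_flux_small_near_zero[of "e / 2" a] \<open>0 < e\<close> \<open>0 < a\<close> by auto
  obtain R where R: "b < R" "boundary_flux R < e / 2"
    using boundary_flux_small_near_infinity[OF production_bounded, of "e / 2" b] \<open>0 < e\<close> by auto
  have "?lhs \<le> (\<integral>\<^sup>+x\<in>{\<epsilon>..R}. ennreal ((n x t)\<^sup>2) \<partial>lborel)
      + (\<integral>\<^sup>+\<tau>\<in>{s..t}. (\<integral>\<^sup>+x\<in>{\<epsilon>..R}. ennreal ((n x \<tau>)\<^sup>2 + x\<^sup>2 * (nx x \<tau>)\<^sup>2) \<partial>lborel) \<partial>lborel)"
    using \<epsilon> R by (intro add_mono set_nn_integral_mono_set iterated_nn_integral_mono_set) auto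
  also have "\<dots> \<le> (\<integral>\<^sup>+x\<in>{\<epsilon>..R}. ennreal ((n x s)\<^sup>2) \<partial>lborel)
      + 2 * (\<integral>\<^sup>+\<tau>\<in>{s..t}. (\<integral>\<^sup>+x\<in>{\<epsilon>..R}. ennreal (x * (n x \<tau>)\<^sup>2) \<partial>lborel) \<partial>lborel)
      + ennreal (boundary_flux R - boundary_flux \<epsilon>)"
    using \<epsilon> R assms by (intro nn_energy_inequality_interval) auto
  also have "\<dots> \<le> ?initial + 2 * ?production + ennreal e"
    using \<epsilon> R by (intro add_mono mult_left_mono set_nn_integral_mono_set iterated_nn_integral_mono_set
        ennreal_leI) auto
  finally show "?lhs \<le> ?initial + 2 * ?production + ennreal e" .
qed

lemma energy_inequality:
  "(\<integral>\<^sup>+x\<in>{0<..}. ennreal ((n x t)\<^sup>2) \<partial>lborel)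
     + (\<integral>\<^sup>+\<tau>\<in>{s..t}. (\<integral>\<^sup>+x\<in>{0<..}. ennreal ((n x \<tau>)\<^sup>2 + x\<^sup>2 * (nx x \<tau>)\<^sup>2) \<partial>lborel) \<partial>lborel)
   \<le> (\<integral>\<^sup>+x\<in>{0<..}. ennreal ((n x s)\<^sup>2) \<partial>lborel)
     + 2 * (\<integral>\<^sup>+\<tau>\<in>{s..t}. (\<integral>\<^sup>+x\<in>{0<..}. ennreal (x * (n x \<tau>)\<^sup>2) \<partial>lborel) \<partial>lborel)"
  (is "?final + ?dissipation \<le> ?initial + 2 * ?production")
proof (cases "?production = \<infinity>")
  case True
  then show ?thesis
    by (simp add: ennreal_mult_top)
next
  case False
  define A where "A k = (\<integral>\<^sup>+x\<in>positive_exhaustion k. ennreal ((n x t)\<^sup>2) \<partial>lborel)" for k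
  define B where "B k = (\<integral>\<^sup>+\<tau>\<in>{s..t}. (\<integral>\<^sup>+x\<in>positive_exhaustion k.
      ennreal ((n x \<tau>)\<^sup>2 + x\<^sup>2 * (nx x \<tau>)\<^sup>2) \<partial>lborel) \<partial>lborel)" for k
  have "?final = (SUP k. A k)"
    unfolding A_def using slab
    by (intro nn_integral_SUP_positive_exhaustion) (auto intro!: continuous_intros)
  moreover have "?dissipation = (SUP k. B k)"
    unfolding B_def using slab
    by (intro iterated_nn_integral_SUP_positive_exhaustion) (auto simp: case_prod_beta' intro!: continuous_intros)
  moreover have "incseq A" "incseq B"
    using incseq_positive_exhaustion
    by (auto simp: incseq_def A_def B_def intro!: set_nn_integral_mono_set iterated_nn_integral_mono_set)
  moreover have "A k + B k \<le> ?initial + 2 * ?production" for k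
  proof -
    have "0 < 1 / (real k + 1)" "1 / (real k + 1) \<le> real k + 1"
      by (auto simp: divide_le_eq_1 intro: order_trans[of _ 1])
    then show ?thesis
      unfolding A_def B_def positive_exhaustion_def using False
      by (intro truncated_energy_inequality)
  qed
  ultimately show ?thesis
    by (simp add: ennreal_SUP_add[symmetric] SUP_least)
qed

end

lemma kompaneets_solution_imp_classical:
  assumes "kompaneets_solution n0 n"
  obtains nx nt where "kompaneets_classical n nx nt"
proof -
  from assms obtain nx nxx nt :: "real \<Rightarrow> real \<Rightarrow> real" where
    "continuous_on ({0<..} \<times> {0<..}) (\<lambda>(x, t). n x t)"
    "continuous_on ({0<..} \<times> {0<..}) (\<lambda>(x, t). nx x t)"
    "continuous_on ({0<..} \<times> {0<..}) (\<lambda>(x, t). nt x t)"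
    "\<forall>x>0. \<forall>t>0.
       ((\<lambda>y. n y t) has_real_derivative nx x t) (at x) \<and>
       ((\<lambda>y. nx y t) has_real_derivative nxx x t) (at x) \<and>
       ((\<lambda>s. n x s) has_real_derivative nt x t) (at t) \<and>
       ((\<lambda>y. kflux y (n y t) (nx y t)) has_real_derivative nt x t) (at x)"
    unfolding kompaneets_solution_def by blast
  moreover have "\<forall>x>0. \<forall>t>0. 0 \<le> n x t"
    using assms unfolding kompaneets_solution_def by (rule conjunct1)
  ultimately have "kompaneets_classical n nx nt"
    by unfold_locales auto
  then show thesis
    by (rule that)
qed

lemma (in kompaneets_classical) kompaneets_slab_AE_bounded:
  assumes "0 < s" "s < t" "\<forall>\<tau>\<in>{s..t}. AE x in lborel. 0 < x \<longrightarrow> \<bar>n x \<tau>\<bar> \<le> M"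
  shows "kompaneets_slab n nx nt s t M"
  using assms AE_bounded_imp_bounded by unfold_locales auto

theorem proposition3p11:
  fixes n0 :: "real \<Rightarrow> real" and n :: "real \<Rightarrow> real \<Rightarrow> real" and s t :: real
  assumes meas: "n0 \<in> borel_measurable lborel"
    and nonneg: "\<forall>x>0. 0 \<le> n0 x"
    and bdd: "\<exists>B. \<forall>x>0. \<bar>n0 x\<bar> \<le> B"
    and decay: "((\<lambda>x. x\<^sup>2 * n0 x) \<longlongrightarrow> 0) at_top"
    and sol: "kompaneets_solution n0 n"
    and st: "0 < s" "s < t"
  shows "(\<integral>\<^sup>+ x \<in> {0<..}. ennreal ((n x t)\<^sup>2) \<partial>lborel)
         + (\<integral>\<^sup>+ \<tau> \<in> {s..t}. (\<integral>\<^sup>+ x \<in> {0<..}.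
               ennreal ((n x \<tau>)\<^sup>2 + x\<^sup>2 * (deriv (\<lambda>y. n y \<tau>) x)\<^sup>2) \<partial>lborel) \<partial>lborel)
       \<le> (\<integral>\<^sup>+ x \<in> {0<..}. ennreal ((n x s)\<^sup>2) \<partial>lborel)
         + 2 * (\<integral>\<^sup>+ \<tau> \<in> {s..t}. (\<integral>\<^sup>+ x \<in> {0<..}.
               ennreal (x * (n x \<tau>)\<^sup>2) \<partial>lborel) \<partial>lborel)"
proof -
  obtain nx nt where classical: "kompaneets_classical n nx nt"
    using sol by (rule kompaneets_solution_imp_classical)
  have "\<forall>T>0. \<exists>M. \<forall>\<tau>\<in>{0..T}. AE x in lborel. 0 < x \<longrightarrow> \<bar>n x \<tau>\<bar> \<le> M"
    using sol unfolding kompaneets_solution_def by (elim conjE) assumption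
  moreover have "0 < t"
    using st by simp
  ultimately obtain M where "\<forall>\<tau>\<in>{0..t}. AE x in lborel. 0 < x \<longrightarrow> \<bar>n x \<tau>\<bar> \<le> M"
    by blast
  then interpret kompaneets_slab n nx nt s t M
    using classical st by (intro kompaneets_classical.kompaneets_slab_AE_bounded) auto
  have "(\<integral>\<^sup>+ \<tau> \<in> {s..t}. (\<integral>\<^sup>+ x \<in> {0<..}.
          ennreal ((n x \<tau>)\<^sup>2 + x\<^sup>2 * (deriv (\<lambda>y. n y \<tau>) x)\<^sup>2) \<partial>lborel) \<partial>lborel)
      = (\<integral>\<^sup>+ \<tau> \<in> {s..t}. (\<integral>\<^sup>+ x \<in> {0<..}.
          ennreal ((n x \<tau>)\<^sup>2 + x\<^sup>2 * (nx x \<tau>)\<^sup>2) \<partial>lborel) \<partial>lborel)"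
    using slab by (intro set_nn_integral_cong) (auto simp: DERIV_imp_deriv[OF has_derivative_x])
  then show ?thesis
    using energy_inequality by simp
qed

end
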